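(* Let $\omega\in\Omega_+$ be such that $0$ is $\omega$-transient. Then \[\lim_{K\to\infty}\frac{E_{0,\omega}[D^+_{T_K}]}{K}=1.\]
   Context: Cookie environments: $\Omega_+=([1/2,1]^{\mathbb N})^{\mathbb Z}$. $P_{x,\omega}$ (expectation $E_{x,\omega}$) is the law of the nearest-neighbor process $(X_n)_{n\ge0}$ with $X_0=x$ which, on its $i$-th visit to site $z$, jumps to $z+1$ with probability $\omega(z,i)$ and to $z-1$ otherwise. $T_k=\inf\{n\ge0:X_n=k\}$; $R_k=\{X_n=k\text{ i.o.}\}$. A site $y$ is $\omega$-transient if $P_{x,\omega}[R_y]=0$ for all $x\in\mathbb Z$ (and $\omega$-recurrent if $P_{x,\omega}[R_y]=1$ for all $x$; one of the two always holds). $D_n^z=\sum_{i=1}^{\#\{m<n:X_m=z\}}(2\omega(z,i)-1)$ and $D_n^+=\sum_{z\ge0}D_n^z$. *)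

theory Defs
  imports "HOL-Probability.Probability"
begin

text \<open>Cookie environments: omega z i is the probability to jump right on the i-th
  visit (i \<ge> 1) to site z. The value omega z 0 is never used.\<close>

definition Omega_plus :: "(int \<Rightarrow> nat \<Rightarrow> real) set" where
  "Omega_plus = {\<omega>. \<forall>z. \<forall>i\<ge>1. 1/2 \<le> \<omega> z i \<and> \<omega> z i \<le> 1}"

text \<open>Standard construction of the cookie walk: independent coins xi (z,i) with
  P[xi (z,i)] = omega z i; on its i-th visit to z the walk jumps to z+1 iff xi (z,i).\<close>

definition coin_space :: "(int \<Rightarrow> nat \<Rightarrow> real) \<Rightarrow> (int \<times> nat \<Rightarrow> bool) measure" where
  "coin_space \<omega> = PiM UNIV (\<lambda>(z,i). measure_pmf (bernoulli_pmf (\<omega> z i)))"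

fun walk_hist :: "(int \<times> nat \<Rightarrow> bool) \<Rightarrow> int \<Rightarrow> nat \<Rightarrow> int list" where
  "walk_hist \<xi> x 0 = [x]"
| "walk_hist \<xi> x (Suc n) =
     (let h = walk_hist \<xi> x n; y = last h; k = count_list h y
      in h @ [if \<xi> (y, k) then y + 1 else y - 1])"

definition X :: "(int \<times> nat \<Rightarrow> bool) \<Rightarrow> int \<Rightarrow> nat \<Rightarrow> int" where
  "X \<xi> x n = last (walk_hist \<xi> x n)"

definition D :: "(int \<Rightarrow> nat \<Rightarrow> real) \<Rightarrow> (int \<times> nat \<Rightarrow> bool) \<Rightarrow> int \<Rightarrow> nat \<Rightarrow> int \<Rightarrow> real" where
  "D \<omega> \<xi> x n z = (\<Sum>i\<in>{1..card {m. m < n \<and> X \<xi> x m = z}}. 2 * \<omega> z i - 1)"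

text \<open>Only finitely many z have nonzero D_n^z (the visited ones), so the sum over
  all z \<ge> 0 reduces to the sum over visited sites z \<ge> 0.\<close>
definition D_plus :: "(int \<Rightarrow> nat \<Rightarrow> real) \<Rightarrow> (int \<times> nat \<Rightarrow> bool) \<Rightarrow> int \<Rightarrow> nat \<Rightarrow> real" where
  "D_plus \<omega> \<xi> x n = (\<Sum>z\<in>{z. 0 \<le> z \<and> (\<exists>m<n. X \<xi> x m = z)}. D \<omega> \<xi> x n z)"

text \<open>D^+ evaluated at T_K (set to 0 on the event T_K = \<infinity>).\<close>
definition D_plus_at_T :: "(int \<Rightarrow> nat \<Rightarrow> real) \<Rightarrow> (int \<times> nat \<Rightarrow> bool) \<Rightarrow> int \<Rightarrow> int \<Rightarrow> real" where
  "D_plus_at_T \<omega> \<xi> x K =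
     (if \<exists>n. X \<xi> x n = K then D_plus \<omega> \<xi> x (LEAST n. X \<xi> x n = K) else 0)"

definition transient_site :: "(int \<Rightarrow> nat \<Rightarrow> real) \<Rightarrow> int \<Rightarrow> bool" where
  "transient_site \<omega> y \<longleftrightarrow>
     (\<forall>x. AE \<xi> in coin_space \<omega>. \<not> (\<exists>\<^sub>F n in sequentially. X \<xi> x n = y))"

end

theory Submission
  imports Defs
begin

text \<open>
  Let \<open>d\<^sub>m = 2 \<omega>(X\<^sub>m, i\<^sub>m) - 1 \<ge> 0\<close>, where \<open>i\<^sub>m\<close> counts the visits to \<open>X\<^sub>m\<close> up to time \<open>m\<close>,
  be the drift of the walk at step \<open>m\<close>, so that
  \<open>D\<^sup>+\<^sub>n\<close> is the sum of the \<open>d\<^sub>m\<close> over the steps \<open>m < n\<close> taken from sites \<open>X\<^sub>m \<ge> 0\<close>,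
  and \<open>X\<close> is a submartingale. The compensator of \<open>X\<^sup>+\<close> is this same sum plus a term
  \<open>1 - \<omega> \<le> 1\<close> at each visit to \<open>0\<close>. Stopping at \<open>T\<^sub>K\<close>, where \<open>X\<^sup>+ \<le> K\<close> with equality
  once \<open>K\<close> is reached, gives
  \<open>K P[T\<^sub>K \<le> n] - E[visits to 0 before T\<^sub>K] \<le> E[D\<^sup>+ at min n T\<^sub>K] \<le> K\<close>.
  After the \<open>j\<close>-th visit to \<open>0\<close>, every visit to \<open>0\<close> adds at least \<open>1/2\<close> to the compensator of
  \<open>X\<^sup>+\<close>, while \<open>X\<^sup>+\<close> grows by at most \<open>K\<close> on that time window, which is empty unless \<open>0\<close> is
  visited \<open>j\<close> times. Hence the expected number of visits to \<open>0\<close> before \<open>T\<^sub>K\<close> is at most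
  \<open>j - 1 + 2 K b\<^sub>j\<close>, where \<open>b\<^sub>j\<close>, the probability of \<open>j\<close> visits to \<open>0\<close>, tends to \<open>0\<close> by
  transience. Gambler's ruin estimates for the submartingales \<open>X\<close> and \<open>(X + M)\<^sup>2 - n\<close> in
  \<open>(-M, K)\<close> show \<open>T\<^sub>K < \<infinity>\<close> a.s. So \<open>K - (j - 1) - 2 K b\<^sub>j \<le> E[D\<^sup>+\<^sub>T\<^sub>K] \<le> K\<close> for all \<open>j\<close>.
\<close>

section \<open>Walk histories\<close>

definition coin_key :: "int list \<Rightarrow> int \<times> nat" where
  "coin_key h = (last h, count_list h (last h))"

lemma walk_hist_Suc_coin:
  "walk_hist \<xi> x (Suc n) = walk_hist \<xi> x n @
     [if \<xi> (coin_key (walk_hist \<xi> x n)) then last (walk_hist \<xi> x n) + 1 else last (walk_hist \<xi> x n) - 1]"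
  by (simp add: Let_def coin_key_def)

declare walk_hist.simps(2)[simp del]

lemma X_0 [simp]: "X \<xi> x 0 = x"
  by (simp add: X_def)

lemma walk_hist_snoc: "walk_hist \<xi> x (Suc n) = walk_hist \<xi> x n @ [X \<xi> x (Suc n)]"
  by (simp add: X_def walk_hist_Suc_coin)

lemma walk_hist_eq_map: "walk_hist \<xi> x n = map (X \<xi> x) [0..<Suc n]"
  by (induction n) (simp_all add: walk_hist_snoc)

lemma length_walk_hist [simp]: "length (walk_hist \<xi> x n) = Suc n"
  by (simp add: walk_hist_eq_map)

lemma last_walk_hist [simp]: "last (walk_hist \<xi> x n) = X \<xi> x n"
  by (simp add: X_def)

lemma X_Suc: "X \<xi> x (Suc n) = (if \<xi> (coin_key (walk_hist \<xi> x n)) then X \<xi> x n + 1 else X \<xi> x n - 1)"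
  unfolding X_def by (simp add: walk_hist_Suc_coin del: last_walk_hist)

lemma X_Suc_cases: "X \<xi> x (Suc n) = X \<xi> x n + 1 \<or> X \<xi> x (Suc n) = X \<xi> x n - 1"
  by (simp add: X_Suc)

lemma set_walk_hist: "set (walk_hist \<xi> x n) = X \<xi> x ` {..n}"
  by (simp add: walk_hist_eq_map atLeast0LessThan lessThan_Suc_atMost del: upt_Suc)

lemma set_walk_hist_mono: "m \<le> n \<Longrightarrow> set (walk_hist \<xi> x m) \<subseteq> set (walk_hist \<xi> x n)"
  by (auto simp: set_walk_hist)

lemma take_walk_hist: "m \<le> n \<Longrightarrow> take (Suc m) (walk_hist \<xi> x n) = walk_hist \<xi> x m"
  by (simp add: walk_hist_eq_map take_map del: upt_Suc)

lemma finite_range_walk_hist: "finite (range (\<lambda>\<xi>. walk_hist \<xi> x n))"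
proof (rule finite_subset)
  have X_dist: "\<bar>X \<xi> x k - x\<bar> \<le> int k" for \<xi> k
  proof (induction k)
    case (Suc k)
    then show ?case using X_Suc_cases[of \<xi> x k] by auto
  qed simp
  have "X \<xi> x k \<in> {x - int n .. x + int n}" if "k \<le> n" for \<xi> k
    using X_dist[of \<xi> k] that by auto
  then show "range (\<lambda>\<xi>. walk_hist \<xi> x n) \<subseteq> {l. set l \<subseteq> {x - int n .. x + int n} \<and> length l = Suc n}"
    by (auto simp: set_walk_hist length_walk_hist)
  show "finite {l. set l \<subseteq> {x - int n .. x + int n} \<and> length l = Suc n}"
    by (rule finite_lists_length_eq) simp
qed

lemma card_visits_Suc:
  "card {k. k < Suc n \<and> X \<xi> x k = z} = card {k. k < n \<and> X \<xi> x k = z} + (if X \<xi> x n = z then 1 else 0)"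
proof -
  have "{k. k < Suc n \<and> X \<xi> x k = z} = {k. k < n \<and> X \<xi> x k = z} \<union> (if X \<xi> x n = z then {n} else {})"
    by (auto simp: less_Suc_eq)
  then show ?thesis
    by (simp add: card_Un_disjoint)
qed

lemma count_list_walk_hist: "count_list (walk_hist \<xi> x n) z = card {k. k < Suc n \<and> X \<xi> x k = z}"
proof (induction n)
  case 0
  have "{k. k < Suc 0 \<and> X \<xi> x k = z} = (if x = z then {0} else {})"
    by auto
  then show ?case
    by simp
qed (simp add: walk_hist_snoc card_visits_Suc[where n="Suc _"])

lemma count_list_walk_hist_pos: "0 < count_list (walk_hist \<xi> x n) (X \<xi> x n)"
  using count_list_0_iff[of "walk_hist \<xi> x n" "X \<xi> x n"] by (auto simp: set_walk_hist)

lemma count_list_walk_hist_mono: "m \<le> n \<Longrightarrow> count_list (walk_hist \<xi> x m) z \<le> count_list (walk_hist \<xi> x n) z"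
  by (induction rule: dec_induct) (auto simp: walk_hist_snoc)

lemma count_list_walk_hist_less:
  assumes "m < n"
  shows "count_list (walk_hist \<xi> x m) (X \<xi> x n) < count_list (walk_hist \<xi> x n) (X \<xi> x n)"
proof -
  have "[0..<Suc n] = [0..<Suc m] @ [Suc m..<Suc n]"
    using assms upt_add_eq_append[of 0 "Suc m" "n - m"] by simp
  then have "walk_hist \<xi> x n = walk_hist \<xi> x m @ map (X \<xi> x) [Suc m..<Suc n]"
    by (simp only: walk_hist_eq_map map_append)
  moreover have "X \<xi> x n \<in> set (map (X \<xi> x) [Suc m..<Suc n])"
    using assms by simp
  then have "0 < count_list (map (X \<xi> x) [Suc m..<Suc n]) (X \<xi> x n)"
    by (metis count_list_0_iff gr0I)
  ultimately show ?thesis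
    by simp
qed

lemma card_early_visits:
  "card {m. m < n \<and> X \<xi> x m = z \<and> count_list (walk_hist \<xi> x m) z < j} \<le> j - 1"
proof -
  let ?V = "{m. m < n \<and> X \<xi> x m = z \<and> count_list (walk_hist \<xi> x m) z < j}"
  have "inj_on (\<lambda>m. count_list (walk_hist \<xi> x m) z) ?V"
  proof (rule inj_onI)
    fix m m' assume "m \<in> ?V" "m' \<in> ?V"
      and count_eq: "count_list (walk_hist \<xi> x m) z = count_list (walk_hist \<xi> x m') z"
    then have "X \<xi> x m = z" "X \<xi> x m' = z"
      by auto
    then show "m = m'"
      using count_eq count_list_walk_hist_less[of m m' \<xi> x] count_list_walk_hist_less[of m' m \<xi> x]
      by (metis linorder_neqE_nat less_irrefl)
  qed
  moreover have "count_list (walk_hist \<xi> x m) z \<in> {1..<j}" if "m \<in> ?V" for m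
    using that count_list_walk_hist_pos[of \<xi> x m] by auto
  ultimately have "card ?V \<le> card {1..<j}"
    by (intro card_inj_on_le) (auto simp: image_subset_iff)
  then show ?thesis
    by simp
qed

lemma frequently_visits_if_unbounded:
  assumes "\<And>j. \<exists>m. j \<le> count_list (walk_hist \<xi> x m) z"
  shows "\<exists>\<^sub>F n in sequentially. X \<xi> x n = z"
  unfolding frequently_sequentially
proof (rule allI, rule ccontr)
  fix N
  assume "\<not> (\<exists>n\<ge>N. X \<xi> x n = z)"
  then have "{k. k < Suc m \<and> X \<xi> x k = z} \<subseteq> {..<N}" for m
    by (auto simp: not_le[symmetric])
  then have "count_list (walk_hist \<xi> x m) z \<le> N" for m
    using card_mono[of "{..<N}"] by (fastforce simp: count_list_walk_hist)
  then show False
    using assms[of "Suc N"] by (metis not_less_eq_eq)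
qed

definition used_keys :: "int list \<Rightarrow> (int \<times> nat) set" where
  "used_keys l = {coin_key (take k l) | k. 0 < k \<and> k < length l}"

lemma used_keys_walk_hist: "used_keys (walk_hist \<xi> x n) = {coin_key (walk_hist \<xi> x m) | m. m < n}"
proof -
  have "{coin_key (take k (walk_hist \<xi> x n)) | k. 0 < k \<and> k < Suc n} = {coin_key (take (Suc m) (walk_hist \<xi> x n)) | m. m < n}"
    by (metis (no_types, opaque_lifting) Suc_less_eq gr0_conv_Suc zero_less_Suc)
  also have "\<dots> = {coin_key (walk_hist \<xi> x m) | m. m < n}"
    by (metis (no_types, opaque_lifting) less_imp_le_nat take_walk_hist)
  finally show ?thesis by (simp add: used_keys_def walk_hist_eq_map)
qed

lemma coin_key_fresh: "coin_key (walk_hist \<xi> x n) \<notin> used_keys (walk_hist \<xi> x n)"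
  using count_list_walk_hist_less[of _ n \<xi> x] by (fastforce simp: used_keys_walk_hist coin_key_def)

lemma used_keys_walk_hist_Suc:
  "used_keys (walk_hist \<xi> x (Suc n)) = insert (coin_key (walk_hist \<xi> x n)) (used_keys (walk_hist \<xi> x n))"
  by (auto simp: used_keys_walk_hist less_Suc_eq)

lemma walk_hist_Suc_eq_iff:
  "walk_hist \<xi> x (Suc m) = walk_hist \<xi>' x (Suc m) \<longleftrightarrow>
     walk_hist \<xi> x m = walk_hist \<xi>' x m \<and> \<xi> (coin_key (walk_hist \<xi>' x m)) = \<xi>' (coin_key (walk_hist \<xi>' x m))"
  by (auto simp: walk_hist_Suc_coin simp del: last_walk_hist)

section \<open>Stopped walks\<close>

text \<open>\<open>stopped_walk A \<xi> x n\<close> is the walk at time \<open>min n \<tau>\<close>, where \<open>\<tau>\<close> is its first exit time from \<open>A\<close>.\<close>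

fun stopped_walk :: "int set \<Rightarrow> (int \<times> nat \<Rightarrow> bool) \<Rightarrow> int \<Rightarrow> nat \<Rightarrow> int" where
  "stopped_walk A \<xi> x 0 = x"
| "stopped_walk A \<xi> x (Suc n) = (if set (walk_hist \<xi> x n) \<subseteq> A then X \<xi> x (Suc n) else stopped_walk A \<xi> x n)"

lemma stopped_walk_inside: "set (walk_hist \<xi> x n) \<subseteq> A \<Longrightarrow> stopped_walk A \<xi> x n = X \<xi> x n"
  by (cases n) (auto simp: walk_hist_snoc)

lemma stopped_walk_mem_walk_hist: "stopped_walk A \<xi> x n \<in> set (walk_hist \<xi> x n)"
  by (induction n) (auto simp: walk_hist_snoc)

lemma stopped_walk_exit:
  assumes "x \<in> A" and "\<not> set (walk_hist \<xi> x n) \<subseteq> A"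
  shows "stopped_walk A \<xi> x n \<notin> A \<and> (stopped_walk A \<xi> x n - 1 \<in> A \<or> stopped_walk A \<xi> x n + 1 \<in> A)"
  using assms(2)
proof (induction n)
  case (Suc n)
  show ?case
  proof (cases "set (walk_hist \<xi> x n) \<subseteq> A")
    case True
    then have "X \<xi> x n \<in> A" and "X \<xi> x (Suc n) \<notin> A"
      using Suc.prems by (auto simp: set_walk_hist walk_hist_snoc)
    then show ?thesis
      using True X_Suc_cases[of \<xi> x n] by auto
  next
    case False
    then show ?thesis
      using Suc.IH by simp
  qed
qed (use assms(1) in simp)

lemma stopped_walk_increment:
  fixes f :: "int \<Rightarrow> 'a::comm_ring_1"
  shows "f (stopped_walk A \<xi> x (Suc m)) - f (stopped_walk A \<xi> x m)
     = of_bool (set (walk_hist \<xi> x m) \<subseteq> A) * (f (X \<xi> x (Suc m)) - f (X \<xi> x m))"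
  by (simp add: stopped_walk_inside)

lemma sum_stopped_increments:
  fixes f :: "int \<Rightarrow> 'a::comm_ring_1"
  shows "(\<Sum>m<n. of_bool (set (walk_hist \<xi> x m) \<subseteq> A) * (f (X \<xi> x (Suc m)) - f (X \<xi> x m)))
       = f (stopped_walk A \<xi> x n) - f x"
proof -
  have "(\<Sum>m<n. f (stopped_walk A \<xi> x (Suc m)) - f (stopped_walk A \<xi> x m))
      = f (stopped_walk A \<xi> x n) - f (stopped_walk A \<xi> x 0)"
    by (rule sum_lessThan_telescope)
  then show ?thesis
    by (simp only: stopped_walk_increment stopped_walk.simps(1))
qed

lemma sum_increments_from:
  fixes f :: "nat \<Rightarrow> 'a::comm_ring_1"
  assumes "\<And>m. P m \<Longrightarrow> P (Suc m)"
  shows "(\<Sum>m<n. of_bool (P m) * (f (Suc m) - f m)) = (if \<exists>m<n. P m then f n - f (LEAST m. P m) else 0)"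
proof (induction n)
  case (Suc n)
  have P_mono: "P k" if "P m" "m \<le> k" for m k
    using that(2,1) by (induction rule: dec_induct) (auto intro: assms)
  have sum_Suc: "(\<Sum>m<Suc n. of_bool (P m) * (f (Suc m) - f m))
      = (\<Sum>m<n. of_bool (P m) * (f (Suc m) - f m)) + of_bool (P n) * (f (Suc n) - f n)"
    by simp
  show ?case
  proof (cases "\<exists>m<n. P m")
    case True
    then show ?thesis
      using Suc.IH P_mono by (auto simp: sum_Suc less_Suc_eq)
  next
    case False
    then have "P n \<Longrightarrow> (LEAST m. P m) = n"
      by (intro Least_equality) (auto simp: not_less)
    then show ?thesis
      using Suc.IH False by (auto simp: sum_Suc less_Suc_eq)
  qed
qed simp

lemma stopped_walk_below_exit:
  assumes "x < K" and "\<not> set (walk_hist \<xi> x n) \<subseteq> {..<K}"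
  shows "stopped_walk {..<K} \<xi> x n = K"
  using stopped_walk_exit[OF _ assms(2)] assms(1) by auto

lemma walk_hist_below_iff:
  assumes "x < K"
  shows "set (walk_hist \<xi> x n) \<subseteq> {..<K} \<longleftrightarrow> K \<notin> set (walk_hist \<xi> x n)"
proof
  assume "K \<notin> set (walk_hist \<xi> x n)"
  then show "set (walk_hist \<xi> x n) \<subseteq> {..<K}"
    using stopped_walk_below_exit[OF assms] stopped_walk_mem_walk_hist by metis
qed auto

lemma stopped_walk_below:
  assumes "x < K"
  shows "stopped_walk {..<K} \<xi> x n = (if K \<in> set (walk_hist \<xi> x n) then K else X \<xi> x n)"
  using stopped_walk_below_exit[OF assms] walk_hist_below_iff[OF assms] stopped_walk_inside by metis

lemma stopped_walk_below_le:
  assumes "x < K"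
  shows "stopped_walk {..<K} \<xi> x n \<le> K"
proof -
  have "X \<xi> x n \<in> set (walk_hist \<xi> x n)"
    by (simp add: set_walk_hist)
  then show ?thesis
    using stopped_walk_below[OF assms] walk_hist_below_iff[OF assms] by force
qed

lemma stopped_walk_interval:
  assumes "-M < x" and "x < K"
  shows "-M \<le> stopped_walk {-M<..<K} \<xi> x n \<and> stopped_walk {-M<..<K} \<xi> x n \<le> K"
    and "\<not> set (walk_hist \<xi> x n) \<subseteq> {-M<..<K} \<Longrightarrow> K \<notin> set (walk_hist \<xi> x n) \<Longrightarrow> stopped_walk {-M<..<K} \<xi> x n = -M"
proof -
  let ?Y = "stopped_walk {-M<..<K} \<xi> x n"
  show "-M \<le> ?Y \<and> ?Y \<le> K"
  proof (cases "set (walk_hist \<xi> x n) \<subseteq> {-M<..<K}")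
    case True
    then show ?thesis
      using stopped_walk_mem_walk_hist[of "{-M<..<K}" \<xi> x n] by fastforce
  next
    case False
    then show ?thesis
      using stopped_walk_exit[of x "{-M<..<K}" \<xi> n] assms by auto
  qed
  assume exit: "\<not> set (walk_hist \<xi> x n) \<subseteq> {-M<..<K}" and "K \<notin> set (walk_hist \<xi> x n)"
  then have "?Y \<noteq> K"
    using stopped_walk_mem_walk_hist by metis
  then show "?Y = -M"
    using stopped_walk_exit[OF _ exit] assms by auto
qed

lemma sum_square_increments_inside_le:
  assumes "-M < x" and "x < K"
  shows "(\<Sum>m<n. of_bool (set (walk_hist \<xi> x m) \<subseteq> {-M<..<K})
      * (real_of_int ((X \<xi> x (Suc m) + M)\<^sup>2) - real_of_int ((X \<xi> x m + M)\<^sup>2))) \<le> real_of_int ((K + M)\<^sup>2)"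
proof -
  let ?Z = "stopped_walk {-M<..<K} \<xi> x n"
  have "0 \<le> ?Z + M" and "?Z + M \<le> K + M"
    using stopped_walk_interval(1)[OF assms, of \<xi> n] by auto
  then have "(?Z + M)\<^sup>2 \<le> (K + M)\<^sup>2"
    by (intro power_mono)
  then have "real_of_int ((?Z + M)\<^sup>2) - real_of_int ((x + M)\<^sup>2) \<le> real_of_int ((K + M)\<^sup>2)"
    by (simp only: of_int_le_iff flip: of_int_diff) (use zero_le_power2[of "x + M"] in linarith)
  then show ?thesis
    by (simp only: sum_stopped_increments[where f="\<lambda>y. real_of_int ((y + M)\<^sup>2)"])
qed

lemma sum_increments_inside_le:
  assumes "-M < x" and "x < K"
  shows "x + (\<Sum>m<n. of_bool (set (walk_hist \<xi> x m) \<subseteq> {-M<..<K}) * (real_of_int (X \<xi> x (Suc m)) - real_of_int (X \<xi> x m)))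
      \<le> real_of_int K - real_of_int (K + M) * of_bool (\<not> set (walk_hist \<xi> x n) \<subseteq> {-M<..<K} \<and> K \<notin> set (walk_hist \<xi> x n))"
proof -
  have "real_of_int (stopped_walk {-M<..<K} \<xi> x n)
      \<le> real_of_int K - real_of_int (K + M) * of_bool (\<not> set (walk_hist \<xi> x n) \<subseteq> {-M<..<K} \<and> K \<notin> set (walk_hist \<xi> x n))"
    using stopped_walk_interval[OF assms, of \<xi> n] assms by auto
  then show ?thesis
    unfolding sum_stopped_increments[where f=real_of_int] by linarith
qed

section \<open>The coin space\<close>

lemma coin_space_eq: "coin_space \<omega> = PiM UNIV (\<lambda>k. measure_pmf (bernoulli_pmf (case_prod \<omega> k)))"
  by (simp add: coin_space_def case_prod_unfold)

lemma prob_space_coin_space: "prob_space (coin_space \<omega>)"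
  unfolding coin_space_eq
  by (rule prob_space_PiM) (auto simp: prob_space_measure_pmf split: prod.splits)

lemma space_coin_space [simp]: "space (coin_space \<omega>) = UNIV"
  by (simp add: coin_space_eq space_PiM)

lemma measure_coin_space_UNIV [simp]: "measure (coin_space \<omega>) UNIV = 1"
  using prob_space.prob_space[OF prob_space_coin_space] by simp

lemma measurable_coin: "(\<lambda>\<xi>. \<xi> k) \<in> coin_space \<omega> \<rightarrow>\<^sub>M count_space UNIV"
proof -
  have "(\<lambda>\<xi>. \<xi> k) \<in> coin_space \<omega> \<rightarrow>\<^sub>M measure_pmf (bernoulli_pmf (case_prod \<omega> k))"
    unfolding coin_space_eq by (rule measurable_component_singleton) simp
  then show ?thesis
    by (simp add: measurable_pmf_measure2)
qed

lemma measurable_walk_hist: "(\<lambda>\<xi>. walk_hist \<xi> x n) \<in> coin_space \<omega> \<rightarrow>\<^sub>M count_space UNIV"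
proof (induction n)
  case (Suc n)
  let ?next = "\<lambda>h \<xi>. h @ [if \<xi> (coin_key h) then last h + 1 else last h - 1]"
  have "?next h \<in> coin_space \<omega> \<rightarrow>\<^sub>M count_space UNIV" for h
    by (rule measurable_compose_countable[OF _ measurable_coin]) simp
  from measurable_compose_countable[OF this Suc] show ?case
    by (simp only: walk_hist_Suc_coin)
qed simp

lemma measurable_walk_hist_fun:
  "(\<And>h. F h \<in> space N) \<Longrightarrow> (\<lambda>\<xi>. F (walk_hist \<xi> x n)) \<in> coin_space \<omega> \<rightarrow>\<^sub>M N"
  by (rule measurable_compose_countable[where f="\<lambda>h \<xi>. F h", OF measurable_const measurable_walk_hist])

lemma sets_walk_hist_pred: "{\<xi>. Q (walk_hist \<xi> x n)} \<in> sets (coin_space \<omega>)"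
  using measurable_sets[OF measurable_walk_hist_fun[of Q "count_space UNIV"], of "{True}"]
  by (simp add: vimage_def)

lemma sets_walk_hist_coin: "{\<xi>. walk_hist \<xi> x m = h \<and> \<xi> k = b} \<in> sets (coin_space \<omega>)"
proof -
  have "{\<xi>. \<xi> k = b} \<in> sets (coin_space \<omega>)"
    using measurable_sets[OF measurable_coin, of "{b}" k \<omega>] by (simp add: vimage_def)
  then show ?thesis
    using sets_walk_hist_pred[of "\<lambda>h'. h' = h" x m \<omega>] by (simp add: Collect_conj_eq sets.Int)
qed

lemma sets_visits_event: "{\<xi>. \<exists>m. j \<le> count_list (walk_hist \<xi> x m) z} \<in> sets (coin_space \<omega>)"
proof -
  have "{\<xi>. \<exists>m. j \<le> count_list (walk_hist \<xi> x m) z} = (\<Union>m. {\<xi>. j \<le> count_list (walk_hist \<xi> x m) z})"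
    by auto
  then show ?thesis
    using sets_walk_hist_pred[where Q="\<lambda>h. j \<le> count_list h z"] by auto
qed

lemma integrable_walk_hist_fun:
  fixes F :: "int list \<Rightarrow> real"
  shows "integrable (coin_space \<omega>) (\<lambda>\<xi>. F (walk_hist \<xi> x n))"
proof -
  interpret prob_space "coin_space \<omega>" by (rule prob_space_coin_space)
  have "norm (F (walk_hist \<xi> x n)) \<le> Max ((\<lambda>h. norm (F h)) ` range (\<lambda>\<xi>. walk_hist \<xi> x n))" for \<xi>
    by (rule Max_ge) (auto intro: finite_range_walk_hist)
  then show ?thesis
    by (intro integrable_const_bound[OF AE_I2] measurable_walk_hist_fun) simp_all
qed

lemma integrable_walk_step_fun:
  fixes F :: "int list \<Rightarrow> int \<Rightarrow> real"
  shows "integrable (coin_space \<omega>) (\<lambda>\<xi>. F (walk_hist \<xi> x n) (X \<xi> x (Suc n)))"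
  using integrable_walk_hist_fun[where F="\<lambda>h. F (butlast h) (last h)" and n="Suc n"]
  by (simp add: walk_hist_snoc)

lemma integrable_sum_walk_hist:
  fixes G :: "nat \<Rightarrow> int list \<Rightarrow> real"
  shows "integrable (coin_space \<omega>) (\<lambda>\<xi>. \<Sum>m<n. G m (walk_hist \<xi> x m))"
  by (intro Bochner_Integration.integrable_sum integrable_walk_hist_fun)

lemma integrable_sum_increments:
  fixes G :: "nat \<Rightarrow> int list \<Rightarrow> real"
  shows "integrable (coin_space \<omega>) (\<lambda>\<xi>. \<Sum>m<n. G m (walk_hist \<xi> x m) * (f (X \<xi> x (Suc m)) - f (X \<xi> x m)))"
  using integrable_walk_step_fun[where F="\<lambda>h y. G m h * (f y - f (last h))" for m]
  by (intro Bochner_Integration.integrable_sum) simp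

lemma integrable_stopped_walk_fun:
  fixes f :: "int \<Rightarrow> real"
  shows "integrable (coin_space \<omega>) (\<lambda>\<xi>. f (stopped_walk A \<xi> x n))"
proof -
  interpret prob_space "coin_space \<omega>"
    by (rule prob_space_coin_space)
  have "f (stopped_walk A \<xi> x n)
      = f x + (\<Sum>m<n. of_bool (set (walk_hist \<xi> x m) \<subseteq> A) * (f (X \<xi> x (Suc m)) - f (X \<xi> x m)))" for \<xi>
    by (simp add: sum_stopped_increments)
  then show ?thesis
    using integrable_sum_increments[where G="\<lambda>m h. of_bool (set h \<subseteq> A)" and f=f] by simp
qed

lemma integrable_indicator_coin_space:
  "A \<in> sets (coin_space \<omega>) \<Longrightarrow> integrable (coin_space \<omega>) (\<lambda>\<xi>. c * indicator A \<xi> :: real)"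
  using prob_space.emeasure_le_1[OF prob_space_coin_space, of \<omega> A]
  by (intro integrable_mult_right integrable_real_indicator) (auto simp: top.not_eq_extremum le_less_trans)

lemma integral_walk_hist_indicator:
  "(\<integral>\<xi>. of_bool (Q (walk_hist \<xi> x n)) \<partial>coin_space \<omega>) = measure (coin_space \<omega>) {\<xi>. Q (walk_hist \<xi> x n)}"
proof -
  have "(\<lambda>\<xi>. of_bool (Q (walk_hist \<xi> x n)) :: real) = indicator {\<xi>. Q (walk_hist \<xi> x n)}"
    by (auto simp: indicator_def)
  then show ?thesis
    using sets_walk_hist_pred[of Q x n \<omega>] by simp
qed

lemma integral_walk_hist_fun:
  fixes G :: "int list \<Rightarrow> real"
  shows "(\<integral>\<xi>. G (walk_hist \<xi> x m) \<partial>coin_space \<omega>)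
       = (\<Sum>h\<in>range (\<lambda>\<xi>. walk_hist \<xi> x m). G h * measure (coin_space \<omega>) {\<xi>. walk_hist \<xi> x m = h})"
proof -
  let ?H = "range (\<lambda>\<xi>. walk_hist \<xi> x m)"
  have "(\<Sum>h\<in>?H. G h * indicator {\<xi>. walk_hist \<xi> x m = h} \<xi>) = (\<Sum>h\<in>?H. if walk_hist \<xi> x m = h then G h else 0)" for \<xi>
    by (intro sum.cong) (auto simp: indicator_def)
  then have "G (walk_hist \<xi> x m) = (\<Sum>h\<in>?H. G h * indicator {\<xi>. walk_hist \<xi> x m = h} \<xi>)" for \<xi>
    using finite_range_walk_hist by (simp add: sum.delta)
  then have "(\<integral>\<xi>. G (walk_hist \<xi> x m) \<partial>coin_space \<omega>)
      = (\<integral>\<xi>. (\<Sum>h\<in>?H. G h * indicator {\<xi>. walk_hist \<xi> x m = h} \<xi>) \<partial>coin_space \<omega>)"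
    by (simp only:)
  also have "\<dots> = (\<Sum>h\<in>?H. \<integral>\<xi>. G h * indicator {\<xi>. walk_hist \<xi> x m = h} \<xi> \<partial>coin_space \<omega>)"
    by (intro Bochner_Integration.integral_sum integrable_indicator_coin_space sets_walk_hist_pred)
  finally show ?thesis
    using sets_walk_hist_pred by simp
qed

definition coin_prob :: "(int \<Rightarrow> nat \<Rightarrow> real) \<Rightarrow> int \<times> nat \<Rightarrow> bool \<Rightarrow> real" where
  "coin_prob \<omega> k = pmf (bernoulli_pmf (case_prod \<omega> k))"

lemma measure_coins_eq_prod:
  assumes "finite S"
  shows "measure (coin_space \<omega>) {\<xi>. \<forall>k\<in>S. \<xi> k = \<beta> k} = (\<Prod>k\<in>S. coin_prob \<omega> k (\<beta> k))"
proof -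
  interpret product_prob_space "\<lambda>k. measure_pmf (bernoulli_pmf (case_prod \<omega> k))" UNIV
    by (rule product_prob_spaceI) (simp add: prob_space_measure_pmf)
  have "emeasure (coin_space \<omega>) {\<xi> \<in> space (coin_space \<omega>). \<forall>k\<in>S. \<xi> k \<in> {\<beta> k}}
      = (\<Prod>k\<in>S. emeasure (measure_pmf (bernoulli_pmf (case_prod \<omega> k))) {\<beta> k})"
    unfolding coin_space_eq using assms by (intro emeasure_PiM_Collect) auto
  then have "emeasure (coin_space \<omega>) {\<xi>. \<forall>k\<in>S. \<xi> k = \<beta> k} = (\<Prod>k\<in>S. ennreal (coin_prob \<omega> k (\<beta> k)))"
    by (simp add: emeasure_pmf_single coin_prob_def)
  then show ?thesis
    by (simp add: measure_def prod_ennreal coin_prob_def prod_nonneg)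
qed

lemma prod_insert_fun_upd:
  assumes "finite S" and "k \<notin> S"
  shows "(\<Prod>j\<in>insert k S. g j ((\<beta>(k := b)) j)) = g k b * (\<Prod>j\<in>S. g j (\<beta> j))"
proof -
  have "(\<Prod>j\<in>S. g j ((\<beta>(k := b)) j)) = (\<Prod>j\<in>S. g j (\<beta> j))"
    using assms(2) by (intro prod.cong) auto
  then show ?thesis
    using assms by simp
qed

lemma measure_walk_hist_fresh_coins:
  assumes "finite S" and "S \<inter> used_keys h = {}"
  shows "measure (coin_space \<omega>) {\<xi>. walk_hist \<xi> x m = h \<and> (\<forall>k\<in>S. \<xi> k = \<beta> k)}
       = measure (coin_space \<omega>) {\<xi>. walk_hist \<xi> x m = h} * (\<Prod>k\<in>S. coin_prob \<omega> k (\<beta> k))"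
  using assms
proof (induction m arbitrary: h S \<beta>)
  case 0
  show ?case
    using measure_coins_eq_prod[OF "0.prems"(1)] by (cases "h = [x]") simp_all
next
  case (Suc m)
  show ?case
  proof (cases "\<exists>\<xi>'. walk_hist \<xi>' x (Suc m) = h")
    case False
    then show ?thesis by simp
  next
    case True
    then obtain \<xi>' where h: "h = walk_hist \<xi>' x (Suc m)" by metis
    define h' where "h' = walk_hist \<xi>' x m"
    define k where "k = coin_key h'"
    define b where "b = \<xi>' k"
    have hist_iff: "walk_hist \<xi> x (Suc m) = h \<longleftrightarrow> walk_hist \<xi> x m = h' \<and> \<xi> k = b" for \<xi>
      unfolding h h'_def k_def b_def by (rule walk_hist_Suc_eq_iff)
    have used: "used_keys h = insert k (used_keys h')"
      unfolding h h'_def k_def by (rule used_keys_walk_hist_Suc)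
    have "k \<notin> used_keys h'"
      unfolding k_def h'_def by (rule coin_key_fresh)
    with Suc.prems used have k_notin: "k \<notin> S" and disj: "insert k S \<inter> used_keys h' = {}"
      by auto
    have "{\<xi>. walk_hist \<xi> x (Suc m) = h \<and> (\<forall>j\<in>S. \<xi> j = \<beta> j)}
        = {\<xi>. walk_hist \<xi> x m = h' \<and> (\<forall>j\<in>insert k S. \<xi> j = (\<beta>(k := b)) j)}"
      using k_notin by (auto simp: hist_iff)
    also have "measure (coin_space \<omega>) \<dots>
        = measure (coin_space \<omega>) {\<xi>. walk_hist \<xi> x m = h'} * (\<Prod>j\<in>insert k S. coin_prob \<omega> j ((\<beta>(k := b)) j))"
      using Suc.prems(1) disj by (intro Suc.IH) auto
    also have "(\<Prod>j\<in>insert k S. coin_prob \<omega> j ((\<beta>(k := b)) j)) = coin_prob \<omega> k b * (\<Prod>j\<in>S. coin_prob \<omega> j (\<beta> j))"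
      using Suc.prems(1) k_notin by (rule prod_insert_fun_upd)
    also have "measure (coin_space \<omega>) {\<xi>. walk_hist \<xi> x m = h'} * (coin_prob \<omega> k b * (\<Prod>j\<in>S. coin_prob \<omega> j (\<beta> j)))
        = measure (coin_space \<omega>) {\<xi>. walk_hist \<xi> x m = h' \<and> (\<forall>j\<in>{k}. \<xi> j = b)} * (\<Prod>j\<in>S. coin_prob \<omega> j (\<beta> j))"
      using Suc.IH[of "{k}" h' "\<lambda>_. b"] \<open>k \<notin> used_keys h'\<close> by simp
    also have "{\<xi>. walk_hist \<xi> x m = h' \<and> (\<forall>j\<in>{k}. \<xi> j = b)} = {\<xi>. walk_hist \<xi> x (Suc m) = h}"
      by (auto simp: hist_iff)
    finally show ?thesis .
  qed
qed

lemma integral_next_coin: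
  fixes F :: "int list \<Rightarrow> bool \<Rightarrow> real"
  shows "(\<integral>\<xi>. F (walk_hist \<xi> x m) (\<xi> (coin_key (walk_hist \<xi> x m))) \<partial>coin_space \<omega>)
       = (\<integral>\<xi>. (\<Sum>b\<in>UNIV. coin_prob \<omega> (coin_key (walk_hist \<xi> x m)) b * F (walk_hist \<xi> x m) b) \<partial>coin_space \<omega>)"
proof -
  let ?H = "range (\<lambda>\<xi>. walk_hist \<xi> x m)"
  let ?A = "\<lambda>h b. {\<xi>. walk_hist \<xi> x m = h \<and> \<xi> (coin_key h) = b}"
  have "(\<Sum>h\<in>?H. \<Sum>b\<in>UNIV. F h b * indicator (?A h b) \<xi>) = (\<Sum>h\<in>?H. if walk_hist \<xi> x m = h then F h (\<xi> (coin_key h)) else 0)" for \<xi>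
    by (intro sum.cong) (auto simp: UNIV_bool indicator_def)
  then have "F (walk_hist \<xi> x m) (\<xi> (coin_key (walk_hist \<xi> x m))) = (\<Sum>h\<in>?H. \<Sum>b\<in>UNIV. F h b * indicator (?A h b) \<xi>)" for \<xi>
    using finite_range_walk_hist by (simp add: sum.delta)
  then have "(\<integral>\<xi>. F (walk_hist \<xi> x m) (\<xi> (coin_key (walk_hist \<xi> x m))) \<partial>coin_space \<omega>)
      = (\<integral>\<xi>. (\<Sum>h\<in>?H. \<Sum>b\<in>UNIV. F h b * indicator (?A h b) \<xi>) \<partial>coin_space \<omega>)"
    by (simp only:)
  also have "\<dots> = (\<Sum>h\<in>?H. \<Sum>b\<in>UNIV. \<integral>\<xi>. F h b * indicator (?A h b) \<xi> \<partial>coin_space \<omega>)"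
    by (simp only: Bochner_Integration.integral_sum Bochner_Integration.integrable_sum
        integrable_indicator_coin_space sets_walk_hist_coin)
  also have "\<dots> = (\<Sum>h\<in>?H. \<Sum>b\<in>UNIV. F h b * measure (coin_space \<omega>) (?A h b))"
    using sets_walk_hist_coin by simp
  also have "\<dots> = (\<Sum>h\<in>?H. (\<Sum>b\<in>UNIV. coin_prob \<omega> (coin_key h) b * F h b) * measure (coin_space \<omega>) {\<xi>. walk_hist \<xi> x m = h})"
  proof (intro sum.cong refl)
    fix h assume "h \<in> ?H"
    then have "{coin_key h} \<inter> used_keys h = {}"
      using coin_key_fresh by auto
    then have "measure (coin_space \<omega>) (?A h b) = measure (coin_space \<omega>) {\<xi>. walk_hist \<xi> x m = h} * coin_prob \<omega> (coin_key h) b" for b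
      using measure_walk_hist_fresh_coins[of "{coin_key h}" h \<omega> x m "\<lambda>_. b"] by simp
    then show "(\<Sum>b\<in>UNIV. F h b * measure (coin_space \<omega>) (?A h b))
        = (\<Sum>b\<in>UNIV. coin_prob \<omega> (coin_key h) b * F h b) * measure (coin_space \<omega>) {\<xi>. walk_hist \<xi> x m = h}"
      by (simp add: sum_distrib_right sum_distrib_left mult_ac)
  qed
  also have "\<dots> = (\<integral>\<xi>. (\<Sum>b\<in>UNIV. coin_prob \<omega> (coin_key (walk_hist \<xi> x m)) b * F (walk_hist \<xi> x m) b) \<partial>coin_space \<omega>)"
    by (rule integral_walk_hist_fun[symmetric])
  finally show ?thesis .
qed

section \<open>Cookie walks in \<open>\<Omega>\<^sub>+\<close>\<close>

text \<open>The estimates below are stated for predictable sums \<open>\<Sum>m<n. of_bool (P m) * f m\<close>, the form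
  in which \<open>integral_sum_increments\<close> applies; these simp rules would turn them into sums over
  filtered index sets.\<close>

declare sum_of_bool_eq [simp del] sum_of_bool_mult_eq [simp del]

locale cookie_env =
  fixes \<omega> :: "int \<Rightarrow> nat \<Rightarrow> real"
  assumes Omega_plus: "\<omega> \<in> Omega_plus"
begin

sublocale coins: prob_space "coin_space \<omega>"
  by (rule prob_space_coin_space)

definition right_prob :: "int list \<Rightarrow> real" where
  "right_prob h = \<omega> (last h) (count_list h (last h))"

lemma right_prob_bounds: "1/2 \<le> right_prob (walk_hist \<xi> x m) \<and> right_prob (walk_hist \<xi> x m) \<le> 1"
  using Omega_plus count_list_walk_hist_pos[of \<xi> x m] by (simp add: Omega_plus_def right_prob_def)

lemma drift_nonneg: "0 \<le> 2 * right_prob (walk_hist \<xi> x m) - 1"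
  using right_prob_bounds[of \<xi> x m] by simp

lemma right_prob_walk_hist:
  "right_prob (walk_hist \<xi> x n) = \<omega> (X \<xi> x n) (Suc (card {k. k < n \<and> X \<xi> x k = X \<xi> x n}))"
  by (simp add: right_prob_def count_list_walk_hist card_visits_Suc)

lemma D_eq_sum: "D \<omega> \<xi> x n z = (\<Sum>m<n. if X \<xi> x m = z then 2 * right_prob (walk_hist \<xi> x m) - 1 else 0)"
proof (induction n)
  case (Suc n)
  then show ?case
    by (simp add: D_def card_visits_Suc right_prob_walk_hist)
qed (simp add: D_def)

lemma D_plus_eq_sum: "D_plus \<omega> \<xi> x n = (\<Sum>m<n. if 0 \<le> X \<xi> x m then 2 * right_prob (walk_hist \<xi> x m) - 1 else 0)"
proof -
  let ?Z = "{z. 0 \<le> z \<and> (\<exists>m<n. X \<xi> x m = z)}"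
  have "D_plus \<omega> \<xi> x n = (\<Sum>m<n. \<Sum>z\<in>?Z. if X \<xi> x m = z then 2 * right_prob (walk_hist \<xi> x m) - 1 else 0)"
    unfolding D_plus_def D_eq_sum by (rule sum.swap)
  also have "\<dots> = (\<Sum>m<n. if 0 \<le> X \<xi> x m then 2 * right_prob (walk_hist \<xi> x m) - 1 else 0)"
  proof (intro sum.cong refl)
    fix m assume "m \<in> {..<n}"
    moreover have "finite ?Z"
      by (rule finite_subset[of _ "X \<xi> x ` {..<n}"]) auto
    ultimately show "(\<Sum>z\<in>?Z. if X \<xi> x m = z then 2 * right_prob (walk_hist \<xi> x m) - 1 else 0)
        = (if 0 \<le> X \<xi> x m then 2 * right_prob (walk_hist \<xi> x m) - 1 else 0)"
      by (auto simp: sum.delta)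
  qed
  finally show ?thesis .
qed

lemma coin_prob_coin_key:
  "coin_prob \<omega> (coin_key (walk_hist \<xi> x m)) b
     = (if b then right_prob (walk_hist \<xi> x m) else 1 - right_prob (walk_hist \<xi> x m))"
  using right_prob_bounds[of \<xi> x m] by (simp add: coin_prob_def coin_key_def right_prob_def)

definition generator :: "(int \<Rightarrow> real) \<Rightarrow> int list \<Rightarrow> real" where
  "generator f h = right_prob h * f (last h + 1) + (1 - right_prob h) * f (last h - 1) - f (last h)"

lemma integral_increment:
  "(\<integral>\<xi>. G (walk_hist \<xi> x m) * (f (X \<xi> x (Suc m)) - f (X \<xi> x m)) \<partial>coin_space \<omega>)
     = (\<integral>\<xi>. G (walk_hist \<xi> x m) * generator f (walk_hist \<xi> x m) \<partial>coin_space \<omega>)"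
proof -
  let ?F = "\<lambda>h b. G h * (f (if b then last h + 1 else last h - 1) - f (last h))"
  have "(\<integral>\<xi>. G (walk_hist \<xi> x m) * (f (X \<xi> x (Suc m)) - f (X \<xi> x m)) \<partial>coin_space \<omega>)
      = (\<integral>\<xi>. ?F (walk_hist \<xi> x m) (\<xi> (coin_key (walk_hist \<xi> x m))) \<partial>coin_space \<omega>)"
    by (intro Bochner_Integration.integral_cong) (simp_all add: X_Suc)
  also have "\<dots> = (\<integral>\<xi>. (\<Sum>b\<in>UNIV. coin_prob \<omega> (coin_key (walk_hist \<xi> x m)) b * ?F (walk_hist \<xi> x m) b) \<partial>coin_space \<omega>)"
    by (rule integral_next_coin)
  also have "\<dots> = (\<integral>\<xi>. G (walk_hist \<xi> x m) * generator f (walk_hist \<xi> x m) \<partial>coin_space \<omega>)"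
    by (simp add: UNIV_bool coin_prob_coin_key generator_def algebra_simps)
  finally show ?thesis .
qed

lemma integral_sum_increments:
  "(\<integral>\<xi>. (\<Sum>m<n. G m (walk_hist \<xi> x m) * (f (X \<xi> x (Suc m)) - f (X \<xi> x m))) \<partial>coin_space \<omega>)
     = (\<integral>\<xi>. (\<Sum>m<n. G m (walk_hist \<xi> x m) * generator f (walk_hist \<xi> x m)) \<partial>coin_space \<omega>)"
proof -
  have "integrable (coin_space \<omega>) (\<lambda>\<xi>. G m (walk_hist \<xi> x m) * (f (X \<xi> x (Suc m)) - f (X \<xi> x m)))" for m
    using integrable_walk_step_fun[where F="\<lambda>h y. G m h * (f y - f (last h))"] by simp
  moreover have "integrable (coin_space \<omega>) (\<lambda>\<xi>. G m (walk_hist \<xi> x m) * generator f (walk_hist \<xi> x m))" for m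
    by (rule integrable_walk_hist_fun)
  ultimately show ?thesis
    by (simp add: Bochner_Integration.integral_sum integral_increment)
qed

lemma generator_of_int: "generator real_of_int h = 2 * right_prob h - 1"
  by (simp add: generator_def algebra_simps)

lemma generator_pos_part:
  "generator (\<lambda>y. real_of_int (max 0 y)) h
     = (if 0 \<le> last h then 2 * right_prob h - 1 else 0) + (if last h = 0 then 1 - right_prob h else 0)"
  by (auto simp: generator_def algebra_simps max_def)

lemma generator_pos_part_bounds:
  "0 \<le> generator (\<lambda>y. real_of_int (max 0 y)) (walk_hist \<xi> x m)"
  "of_bool (X \<xi> x m = 0) \<le> 2 * generator (\<lambda>y. real_of_int (max 0 y)) (walk_hist \<xi> x m)"
  using right_prob_bounds[of \<xi> x m] by (auto simp: generator_pos_part)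

lemma generator_square:
  "generator (\<lambda>y. real_of_int ((y + c)\<^sup>2)) h = 2 * real_of_int (last h + c) * (2 * right_prob h - 1) + 1"
  by (simp add: generator_def power2_eq_square algebra_simps)

subsection \<open>The walk reaches every level \<open>K > 0\<close>\<close>

lemma prob_inside_interval_le:
  assumes "0 < K" and "0 < M"
  shows "real n * measure (coin_space \<omega>) {\<xi>. set (walk_hist \<xi> 0 n) \<subseteq> {-M<..<K}} \<le> real_of_int ((K + M)\<^sup>2)"
proof -
  let ?inside = "\<lambda>h. of_bool (set h \<subseteq> {-M<..<K}) :: real"
  let ?sq = "\<lambda>y. real_of_int ((y + M)\<^sup>2)"
  have "real n * measure (coin_space \<omega>) {\<xi>. set (walk_hist \<xi> 0 n) \<subseteq> {-M<..<K}}
      = (\<integral>\<xi>. real n * ?inside (walk_hist \<xi> 0 n) \<partial>coin_space \<omega>)"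
    using integral_walk_hist_indicator[where Q="\<lambda>h. set h \<subseteq> {-M<..<K}" and x=0 and n=n] by simp
  also have "\<dots> \<le> (\<integral>\<xi>. (\<Sum>m<n. ?inside (walk_hist \<xi> 0 m)) \<partial>coin_space \<omega>)"
  proof (intro integral_mono integrable_walk_hist_fun integrable_sum_walk_hist)
    fix \<xi>
    show "real n * ?inside (walk_hist \<xi> 0 n) \<le> (\<Sum>m<n. ?inside (walk_hist \<xi> 0 m))"
    proof (cases "set (walk_hist \<xi> 0 n) \<subseteq> {-M<..<K}")
      case True
      then have "?inside (walk_hist \<xi> 0 m) = 1" if "m < n" for m
        using that set_walk_hist_mono[of m n \<xi> 0] by auto
      then show ?thesis
        by simp
    qed (simp add: sum_nonneg)
  qed
  also have "\<dots> \<le> (\<integral>\<xi>. (\<Sum>m<n. ?inside (walk_hist \<xi> 0 m) * generator ?sq (walk_hist \<xi> 0 m)) \<partial>coin_space \<omega>)"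
  proof (intro integral_mono integrable_sum_walk_hist sum_mono)
    fix \<xi> m
    have "0 \<le> 2 * real_of_int (X \<xi> 0 m + M) * (2 * right_prob (walk_hist \<xi> 0 m) - 1)"
      if "set (walk_hist \<xi> 0 m) \<subseteq> {-M<..<K}"
      using that drift_nonneg[of \<xi> 0 m] by (auto simp: set_walk_hist)
    then show "?inside (walk_hist \<xi> 0 m) \<le> ?inside (walk_hist \<xi> 0 m) * generator ?sq (walk_hist \<xi> 0 m)"
      using generator_square[of M "walk_hist \<xi> 0 m"] by simp
  qed
  also have "\<dots> = (\<integral>\<xi>. (\<Sum>m<n. ?inside (walk_hist \<xi> 0 m) * (?sq (X \<xi> 0 (Suc m)) - ?sq (X \<xi> 0 m))) \<partial>coin_space \<omega>)"
    by (rule integral_sum_increments[symmetric])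
  also have "\<dots> \<le> real_of_int ((K + M)\<^sup>2)"
    using sum_square_increments_inside_le[of M 0 K] assms
    by (intro coins.integral_le_const integrable_sum_increments AE_I2) simp_all
  finally show ?thesis .
qed

lemma prob_exit_below_le:
  assumes "0 < K" and "0 < M"
  shows "(K + M) * measure (coin_space \<omega>) {\<xi>. \<not> set (walk_hist \<xi> 0 n) \<subseteq> {-M<..<K} \<and> K \<notin> set (walk_hist \<xi> 0 n)} \<le> K"
proof -
  let ?inside = "\<lambda>h. of_bool (set h \<subseteq> {-M<..<K}) :: real"
  let ?low = "\<lambda>h. \<not> set h \<subseteq> {-M<..<K} \<and> K \<notin> set h"
  have "0 \<le> (\<integral>\<xi>. (\<Sum>m<n. ?inside (walk_hist \<xi> 0 m) * generator real_of_int (walk_hist \<xi> 0 m)) \<partial>coin_space \<omega>)"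
    using drift_nonneg by (intro integral_nonneg_AE AE_I2 sum_nonneg) (simp add: generator_of_int)
  also have "\<dots> = (\<integral>\<xi>. (\<Sum>m<n. ?inside (walk_hist \<xi> 0 m) * (real_of_int (X \<xi> 0 (Suc m)) - real_of_int (X \<xi> 0 m))) \<partial>coin_space \<omega>)"
    by (rule integral_sum_increments[symmetric])
  also have "\<dots> \<le> (\<integral>\<xi>. real_of_int K - real_of_int (K + M) * of_bool (?low (walk_hist \<xi> 0 n)) \<partial>coin_space \<omega>)"
    using sum_increments_inside_le[of M 0 K] assms
    by (intro integral_mono integrable_sum_increments Bochner_Integration.integrable_diff integrable_walk_hist_fun) simp_all
  also have "\<dots> = real_of_int K - real_of_int (K + M) * measure (coin_space \<omega>) {\<xi>. ?low (walk_hist \<xi> 0 n)}"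
    using integral_walk_hist_indicator[where Q="?low" and x=0 and n=n]
      integrable_walk_hist_fun[where F="\<lambda>h. of_bool (?low h)" and x=0 and n=n]
    by (subst Bochner_Integration.integral_diff) auto
  finally show ?thesis
    by simp
qed

lemma prob_not_hit_le:
  assumes "0 < K" and "0 < M" and "0 < n"
  shows "measure (coin_space \<omega>) {\<xi>. K \<notin> set (walk_hist \<xi> 0 n)} \<le> real_of_int ((K + M)\<^sup>2) / n + K / (K + M)"
proof -
  let ?inside = "{\<xi>. set (walk_hist \<xi> 0 n) \<subseteq> {-M<..<K}}"
  let ?low = "{\<xi>. \<not> set (walk_hist \<xi> 0 n) \<subseteq> {-M<..<K} \<and> K \<notin> set (walk_hist \<xi> 0 n)}"
  have "measure (coin_space \<omega>) {\<xi>. K \<notin> set (walk_hist \<xi> 0 n)} \<le> measure (coin_space \<omega>) (?inside \<union> ?low)"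
    by (intro coins.finite_measure_mono sets.Un sets_walk_hist_pred) auto
  also have "\<dots> \<le> measure (coin_space \<omega>) ?inside + measure (coin_space \<omega>) ?low"
    by (intro measure_Un_le sets_walk_hist_pred)
  also have "measure (coin_space \<omega>) ?inside \<le> real_of_int ((K + M)\<^sup>2) / n"
    using prob_inside_interval_le[OF assms(1,2), of n] assms(3) by (simp add: field_simps)
  also have "measure (coin_space \<omega>) ?low \<le> K / (K + M)"
    using prob_exit_below_le[OF assms(1,2), of n] assms(1,2) by (simp add: field_simps)
  finally show ?thesis
    by simp
qed

lemma prob_not_hit_tendsto_0:
  assumes "0 < K"
  shows "(\<lambda>n. measure (coin_space \<omega>) {\<xi>. K \<notin> set (walk_hist \<xi> 0 n)}) \<longlonglongrightarrow> 0"
proof (rule LIMSEQ_I)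
  fix r :: real
  assume "0 < r"
  obtain M :: nat where M: "2 * K / r < M"
    using reals_Archimedean2 by blast
  obtain N :: nat where N: "2 * real_of_int ((K + M)\<^sup>2) / r < N"
    using reals_Archimedean2 by blast
  have "0 < 2 * K / r"
    using assms \<open>0 < r\<close> by simp
  then have "0 < M"
    using M by linarith
  have "2 * K < M * r"
    using M \<open>0 < r\<close> by (simp add: pos_divide_less_eq)
  moreover have "0 \<le> K * r"
    using assms \<open>0 < r\<close> by simp
  ultimately have "2 * K < (K + M) * r"
    by (simp add: distrib_right)
  then have exit_part: "K / (K + M) < r / 2"
    using assms by (simp add: pos_divide_less_eq mult_ac)
  have "measure (coin_space \<omega>) {\<xi>. K \<notin> set (walk_hist \<xi> 0 n)} < r" if "N < n" for n
  proof -
    have "2 * real_of_int ((K + M)\<^sup>2) < N * r"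
      using N \<open>0 < r\<close> by (simp add: pos_divide_less_eq del: of_int_power)
    also have "\<dots> < n * r"
      using that \<open>0 < r\<close> by simp
    finally have "real_of_int ((K + M)\<^sup>2) / n < r / 2"
      using that by (simp add: pos_divide_less_eq mult_ac del: of_int_power)
    moreover have "measure (coin_space \<omega>) {\<xi>. K \<notin> set (walk_hist \<xi> 0 n)} \<le> real_of_int ((K + M)\<^sup>2) / n + K / (K + M)"
      using prob_not_hit_le[OF assms, of M n] \<open>0 < M\<close> that by simp
    ultimately show ?thesis
      using exit_part by linarith
  qed
  then show "\<exists>no. \<forall>n\<ge>no. norm (measure (coin_space \<omega>) {\<xi>. K \<notin> set (walk_hist \<xi> 0 n)} - 0) < r"
    by (intro exI[of _ "Suc N"]) auto
qed

lemma AE_hits_level: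
  assumes "0 < K"
  shows "AE \<xi> in coin_space \<omega>. \<exists>n. X \<xi> 0 n = K"
proof (rule AE_I')
  let ?N = "\<Inter>n. {\<xi>. K \<notin> set (walk_hist \<xi> 0 n)}"
  have sets_not_hit: "{\<xi>. K \<notin> set (walk_hist \<xi> 0 n)} \<in> sets (coin_space \<omega>)" for n
    using sets_walk_hist_pred[where Q="\<lambda>h. K \<notin> set h"] .
  then have sets_N: "?N \<in> sets (coin_space \<omega>)"
    by (intro sets.countable_INT') auto
  have "measure (coin_space \<omega>) ?N \<le> measure (coin_space \<omega>) {\<xi>. K \<notin> set (walk_hist \<xi> 0 n)}" for n
    using sets_not_hit by (intro coins.finite_measure_mono) auto
  then have "measure (coin_space \<omega>) ?N \<le> 0"
    using prob_not_hit_tendsto_0[OF assms] by (intro LIMSEQ_le_const) auto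
  then show "?N \<in> null_sets (coin_space \<omega>)"
    using sets_N by (simp add: null_sets_def coins.emeasure_eq_measure measure_le_0_iff)
  show "{\<xi> \<in> space (coin_space \<omega>). \<not> (\<exists>n. X \<xi> 0 n = K)} \<subseteq> ?N"
    by (auto simp: set_walk_hist)
qed

subsection \<open>The drift accumulated before \<open>T\<^sub>K\<close>\<close>

text \<open>\<open>drift_sum K \<xi> n\<close> is \<open>D\<^sup>+\<close> at time \<open>min n T\<^sub>K\<close>; together with \<open>zero_compensator K \<xi> n\<close>
  it is the compensator of \<open>X\<^sup>+\<close> stopped at \<open>T\<^sub>K\<close>.\<close>

definition drift_sum :: "int \<Rightarrow> (int \<times> nat \<Rightarrow> bool) \<Rightarrow> nat \<Rightarrow> real" where
  "drift_sum K \<xi> n = (\<Sum>m<n. if set (walk_hist \<xi> 0 m) \<subseteq> {..<K} \<and> 0 \<le> X \<xi> 0 m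
     then 2 * right_prob (walk_hist \<xi> 0 m) - 1 else 0)"

definition zero_visits :: "int \<Rightarrow> (int \<times> nat \<Rightarrow> bool) \<Rightarrow> nat \<Rightarrow> real" where
  "zero_visits K \<xi> n = (\<Sum>m<n. of_bool (set (walk_hist \<xi> 0 m) \<subseteq> {..<K} \<and> X \<xi> 0 m = 0))"

definition zero_compensator :: "int \<Rightarrow> (int \<times> nat \<Rightarrow> bool) \<Rightarrow> nat \<Rightarrow> real" where
  "zero_compensator K \<xi> n = (\<Sum>m<n. of_bool (set (walk_hist \<xi> 0 m) \<subseteq> {..<K} \<and> X \<xi> 0 m = 0)
     * (1 - right_prob (walk_hist \<xi> 0 m)))"

lemma integrable_drift_sum: "integrable (coin_space \<omega>) (\<lambda>\<xi>. drift_sum K \<xi> n)"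
  using integrable_sum_walk_hist[where G="\<lambda>m h. if set h \<subseteq> {..<K} \<and> 0 \<le> last h then 2 * right_prob h - 1 else 0"]
  by (simp add: drift_sum_def)

lemma integrable_zero_visits: "integrable (coin_space \<omega>) (\<lambda>\<xi>. zero_visits K \<xi> n)"
  using integrable_sum_walk_hist[where G="\<lambda>m h. of_bool (set h \<subseteq> {..<K} \<and> last h = 0)"]
  by (simp add: zero_visits_def)

lemma integrable_zero_compensator: "integrable (coin_space \<omega>) (\<lambda>\<xi>. zero_compensator K \<xi> n)"
  using integrable_sum_walk_hist[where G="\<lambda>m h. of_bool (set h \<subseteq> {..<K} \<and> last h = 0) * (1 - right_prob h)"]
  by (simp add: zero_compensator_def)

lemma zero_compensator_bounds: "0 \<le> zero_compensator K \<xi> n" "zero_compensator K \<xi> n \<le> zero_visits K \<xi> n"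
proof -
  have "0 \<le> 1 - right_prob (walk_hist \<xi> 0 m)" "1 - right_prob (walk_hist \<xi> 0 m) \<le> 1" for m
    using right_prob_bounds[of \<xi> 0 m] by simp_all
  then show "0 \<le> zero_compensator K \<xi> n" "zero_compensator K \<xi> n \<le> zero_visits K \<xi> n"
    unfolding zero_compensator_def zero_visits_def by (auto intro!: sum_nonneg sum_mono mult_left_le)
qed

lemma drift_sum_mono: "n \<le> n' \<Longrightarrow> drift_sum K \<xi> n \<le> drift_sum K \<xi> n'"
  unfolding drift_sum_def using drift_nonneg by (intro sum_mono2) auto

lemma drift_sum_nonneg: "0 \<le> drift_sum K \<xi> n"
  using drift_sum_mono[of 0 n] by (simp add: drift_sum_def)

lemma drift_sum_after_hit:
  assumes "X \<xi> 0 T = K" and "T \<le> n"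
  shows "drift_sum K \<xi> n = drift_sum K \<xi> T"
  using assms(2)
proof (induction rule: dec_induct)
  case (step n)
  have "K \<in> set (walk_hist \<xi> 0 n)"
    using assms(1) step.hyps(1) by (auto simp: set_walk_hist)
  then show ?case
    using step.IH by (auto simp: drift_sum_def)
qed simp

lemma D_plus_at_T_eq_drift_sum:
  assumes "0 < K" and "X \<xi> 0 T = K"
  defines "T_K \<equiv> LEAST n. X \<xi> 0 n = K"
  shows "D_plus_at_T \<omega> \<xi> 0 K = drift_sum K \<xi> T_K"
proof -
  have "set (walk_hist \<xi> 0 m) \<subseteq> {..<K}" if "m < T_K" for m
  proof -
    have "X \<xi> 0 k \<noteq> K" if "k \<le> m" for k
      using not_less_Least[of k "\<lambda>n. X \<xi> 0 n = K"] \<open>m < T_K\<close> that by (simp add: T_K_def)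
    then show ?thesis
      using walk_hist_below_iff[of 0 K \<xi> m] assms(1) by (auto simp: set_walk_hist)
  qed
  then show ?thesis
    using assms(2) by (auto simp: D_plus_at_T_def D_plus_eq_sum drift_sum_def T_K_def intro!: sum.cong)
qed

lemma drift_sum_le_D_plus_at_T:
  assumes "0 < K" and "\<exists>T. X \<xi> 0 T = K"
  shows "drift_sum K \<xi> n \<le> D_plus_at_T \<omega> \<xi> 0 K"
proof -
  define T_K where "T_K = (LEAST n. X \<xi> 0 n = K)"
  have hit: "X \<xi> 0 T_K = K"
    unfolding T_K_def using assms(2) by (rule LeastI_ex)
  have "drift_sum K \<xi> n \<le> drift_sum K \<xi> (max n T_K)"
    by (intro drift_sum_mono) simp
  also have "\<dots> = drift_sum K \<xi> T_K"
    by (rule drift_sum_after_hit[OF hit]) simp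
  also have "\<dots> = D_plus_at_T \<omega> \<xi> 0 K"
    using D_plus_at_T_eq_drift_sum[OF assms(1) hit] by (simp only: T_K_def)
  finally show ?thesis .
qed

lemma integral_pos_part_stopped_walk:
  "(\<integral>\<xi>. real_of_int (max 0 (stopped_walk {..<K} \<xi> 0 n)) \<partial>coin_space \<omega>)
     = (\<integral>\<xi>. drift_sum K \<xi> n \<partial>coin_space \<omega>) + (\<integral>\<xi>. zero_compensator K \<xi> n \<partial>coin_space \<omega>)"
proof -
  let ?pos = "\<lambda>y. real_of_int (max 0 y)"
  let ?below = "\<lambda>h. of_bool (set h \<subseteq> {..<K}) :: real"
  have "(\<integral>\<xi>. ?pos (stopped_walk {..<K} \<xi> 0 n) \<partial>coin_space \<omega>)
      = (\<integral>\<xi>. (\<Sum>m<n. ?below (walk_hist \<xi> 0 m) * (?pos (X \<xi> 0 (Suc m)) - ?pos (X \<xi> 0 m))) \<partial>coin_space \<omega>)"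
    using sum_stopped_increments[where f="?pos" and A="{..<K}" and x=0 and n=n] by simp
  also have "\<dots> = (\<integral>\<xi>. (\<Sum>m<n. ?below (walk_hist \<xi> 0 m) * generator ?pos (walk_hist \<xi> 0 m)) \<partial>coin_space \<omega>)"
    by (rule integral_sum_increments)
  also have "\<dots> = (\<integral>\<xi>. drift_sum K \<xi> n + zero_compensator K \<xi> n \<partial>coin_space \<omega>)"
    by (intro Bochner_Integration.integral_cong refl)
      (auto simp: generator_pos_part drift_sum_def zero_compensator_def sum.distrib[symmetric] intro!: sum.cong)
  also have "\<dots> = (\<integral>\<xi>. drift_sum K \<xi> n \<partial>coin_space \<omega>) + (\<integral>\<xi>. zero_compensator K \<xi> n \<partial>coin_space \<omega>)"
    by (intro Bochner_Integration.integral_add integrable_drift_sum integrable_zero_compensator)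
  finally show ?thesis .
qed

lemma integral_drift_sum_le:
  assumes "0 < K"
  shows "(\<integral>\<xi>. drift_sum K \<xi> n \<partial>coin_space \<omega>) \<le> K"
proof -
  have "0 \<le> (\<integral>\<xi>. zero_compensator K \<xi> n \<partial>coin_space \<omega>)"
    by (intro integral_nonneg_AE AE_I2 zero_compensator_bounds)
  moreover have "(\<integral>\<xi>. real_of_int (max 0 (stopped_walk {..<K} \<xi> 0 n)) \<partial>coin_space \<omega>) \<le> K"
    using stopped_walk_below_le[of 0 K] assms
    by (intro coins.integral_le_const integrable_stopped_walk_fun AE_I2) simp
  ultimately show ?thesis
    using integral_pos_part_stopped_walk[of K n] by linarith
qed

lemma integral_drift_sum_ge:
  assumes "0 < K"
  shows "K * measure (coin_space \<omega>) {\<xi>. K \<in> set (walk_hist \<xi> 0 n)} - (\<integral>\<xi>. zero_visits K \<xi> n \<partial>coin_space \<omega>)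
     \<le> (\<integral>\<xi>. drift_sum K \<xi> n \<partial>coin_space \<omega>)"
proof -
  have "K * measure (coin_space \<omega>) {\<xi>. K \<in> set (walk_hist \<xi> 0 n)}
      = (\<integral>\<xi>. real_of_int K * of_bool (K \<in> set (walk_hist \<xi> 0 n)) \<partial>coin_space \<omega>)"
    using integral_walk_hist_indicator[where Q="\<lambda>h. K \<in> set h" and x=0 and n=n] by simp
  also have "\<dots> \<le> (\<integral>\<xi>. real_of_int (max 0 (stopped_walk {..<K} \<xi> 0 n)) \<partial>coin_space \<omega>)"
    using stopped_walk_below[of 0 K] assms
    by (intro integral_mono integrable_stopped_walk_fun integrable_walk_hist_fun) auto
  finally have "K * measure (coin_space \<omega>) {\<xi>. K \<in> set (walk_hist \<xi> 0 n)}
      \<le> (\<integral>\<xi>. real_of_int (max 0 (stopped_walk {..<K} \<xi> 0 n)) \<partial>coin_space \<omega>)" .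
  moreover have "(\<integral>\<xi>. zero_compensator K \<xi> n \<partial>coin_space \<omega>) \<le> (\<integral>\<xi>. zero_visits K \<xi> n \<partial>coin_space \<omega>)"
    by (intro integral_mono integrable_zero_compensator integrable_zero_visits zero_compensator_bounds)
  ultimately show ?thesis
    using integral_pos_part_stopped_walk[of K n] by linarith
qed

definition visit_prob :: "nat \<Rightarrow> real" where
  "visit_prob j = measure (coin_space \<omega>) {\<xi>. \<exists>m. j \<le> count_list (walk_hist \<xi> 0 m) 0}"

lemma zero_visits_le:
  assumes "1 \<le> j"
  shows "zero_visits K \<xi> n \<le> real j - 1
    + (\<Sum>m<n. of_bool (set (walk_hist \<xi> 0 m) \<subseteq> {..<K} \<and> j \<le> count_list (walk_hist \<xi> 0 m) 0 \<and> X \<xi> 0 m = 0))"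
proof -
  let ?early = "\<lambda>m. X \<xi> 0 m = 0 \<and> count_list (walk_hist \<xi> 0 m) 0 < j"
  let ?late = "\<lambda>m. set (walk_hist \<xi> 0 m) \<subseteq> {..<K} \<and> j \<le> count_list (walk_hist \<xi> 0 m) 0 \<and> X \<xi> 0 m = 0"
  have "zero_visits K \<xi> n \<le> (\<Sum>m<n. of_bool (?early m) + of_bool (?late m))"
    unfolding zero_visits_def by (intro sum_mono) auto
  moreover have "(\<Sum>m<n. of_bool (?early m) :: real) = card {m. m < n \<and> ?early m}"
    by (simp add: sum_of_bool_eq Int_def)
  moreover have "card {m. m < n \<and> ?early m} \<le> j - 1"
    by (rule card_early_visits)
  ultimately show ?thesis
    using assms by (simp add: sum.distrib of_nat_diff)
qed

lemma sum_late_pos_part_increments_le: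
  assumes "0 < K"
  shows "(\<Sum>m<n. of_bool (set (walk_hist \<xi> 0 m) \<subseteq> {..<K} \<and> j \<le> count_list (walk_hist \<xi> 0 m) 0)
      * (real_of_int (max 0 (X \<xi> 0 (Suc m))) - real_of_int (max 0 (X \<xi> 0 m))))
    \<le> real_of_int K * indicator {\<xi>. \<exists>m. j \<le> count_list (walk_hist \<xi> 0 m) 0} \<xi>"
proof -
  let ?started = "\<lambda>m. j \<le> count_list (walk_hist \<xi> 0 m) 0"
  let ?g = "\<lambda>m. real_of_int (max 0 (stopped_walk {..<K} \<xi> 0 m))"
  have "(\<Sum>m<n. of_bool (set (walk_hist \<xi> 0 m) \<subseteq> {..<K} \<and> ?started m)
      * (real_of_int (max 0 (X \<xi> 0 (Suc m))) - real_of_int (max 0 (X \<xi> 0 m))))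
      = (\<Sum>m<n. of_bool (?started m) * (?g (Suc m) - ?g m))"
    by (intro sum.cong refl)
      (simp only: stopped_walk_increment[where f="\<lambda>y. real_of_int (max 0 y)"], auto)
  also have "\<dots> = (if \<exists>m<n. ?started m then ?g n - ?g (LEAST m. ?started m) else 0)"
    using count_list_walk_hist_mono[of _ "Suc _" \<xi> 0 0]
    by (intro sum_increments_from) (meson le_SucI order.refl order_trans)
  also have "\<dots> \<le> real_of_int K * indicator {\<xi>. \<exists>m. j \<le> count_list (walk_hist \<xi> 0 m) 0} \<xi>"
    using stopped_walk_below_le[of 0 K \<xi> n] assms by (auto simp: indicator_def)
  finally show ?thesis .
qed

text \<open>Once \<open>0\<close> has been visited \<open>j\<close> times, each visit to \<open>0\<close> adds at least \<open>1/2\<close> to the compensator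
  of \<open>X\<^sup>+\<close>, whose total increase before \<open>T\<^sub>K\<close> is at most \<open>K\<close>.\<close>

lemma integral_zero_visits_le:
  assumes "0 < K" and "1 \<le> j"
  shows "(\<integral>\<xi>. zero_visits K \<xi> n \<partial>coin_space \<omega>) \<le> real j - 1 + 2 * K * visit_prob j"
proof -
  let ?pos = "\<lambda>y. real_of_int (max 0 y)"
  let ?late = "\<lambda>h. set h \<subseteq> {..<K} \<and> j \<le> count_list h 0"
  let ?E = "{\<xi>. \<exists>m. j \<le> count_list (walk_hist \<xi> 0 m) 0}"
  have "(\<integral>\<xi>. zero_visits K \<xi> n \<partial>coin_space \<omega>)
      \<le> (\<integral>\<xi>. real j - 1 + (\<Sum>m<n. of_bool (?late (walk_hist \<xi> 0 m) \<and> X \<xi> 0 m = 0)) \<partial>coin_space \<omega>)"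
    using integrable_sum_walk_hist[where G="\<lambda>m h. of_bool (?late h \<and> last h = 0)"] zero_visits_le[OF assms(2)]
    by (intro integral_mono integrable_zero_visits Bochner_Integration.integrable_add) auto
  also have "\<dots> = real j - 1 + (\<integral>\<xi>. (\<Sum>m<n. of_bool (?late (walk_hist \<xi> 0 m) \<and> X \<xi> 0 m = 0)) \<partial>coin_space \<omega>)"
    using integrable_sum_walk_hist[where G="\<lambda>m h. of_bool (?late h \<and> last h = 0)"]
    by (subst Bochner_Integration.integral_add) auto
  also have "(\<integral>\<xi>. (\<Sum>m<n. of_bool (?late (walk_hist \<xi> 0 m) \<and> X \<xi> 0 m = 0)) \<partial>coin_space \<omega>)
      \<le> 2 * (\<integral>\<xi>. (\<Sum>m<n. of_bool (?late (walk_hist \<xi> 0 m)) * generator ?pos (walk_hist \<xi> 0 m)) \<partial>coin_space \<omega>)"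
  proof -
    have "of_bool (?late (walk_hist \<xi> 0 m) \<and> X \<xi> 0 m = 0)
        \<le> 2 * (of_bool (?late (walk_hist \<xi> 0 m)) * generator ?pos (walk_hist \<xi> 0 m))" for \<xi> m
      using generator_pos_part_bounds[of \<xi> 0 m] by auto
    then have "(\<integral>\<xi>. (\<Sum>m<n. of_bool (?late (walk_hist \<xi> 0 m) \<and> X \<xi> 0 m = 0)) \<partial>coin_space \<omega>)
        \<le> (\<integral>\<xi>. 2 * (\<Sum>m<n. of_bool (?late (walk_hist \<xi> 0 m)) * generator ?pos (walk_hist \<xi> 0 m)) \<partial>coin_space \<omega>)"
      using integrable_sum_walk_hist[where G="\<lambda>m h. of_bool (?late h \<and> last h = 0)"]
        integrable_sum_walk_hist[where G="\<lambda>m h. of_bool (?late h) * generator ?pos h"]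
      by (intro integral_mono integrable_mult_right) (auto simp: sum_distrib_left intro!: sum_mono)
    then show ?thesis
      by simp
  qed
  also have "(\<integral>\<xi>. (\<Sum>m<n. of_bool (?late (walk_hist \<xi> 0 m)) * generator ?pos (walk_hist \<xi> 0 m)) \<partial>coin_space \<omega>)
      = (\<integral>\<xi>. (\<Sum>m<n. of_bool (?late (walk_hist \<xi> 0 m)) * (?pos (X \<xi> 0 (Suc m)) - ?pos (X \<xi> 0 m))) \<partial>coin_space \<omega>)"
    by (rule integral_sum_increments[symmetric])
  also have "\<dots> \<le> (\<integral>\<xi>. real_of_int K * indicator ?E \<xi> \<partial>coin_space \<omega>)"
    using sum_late_pos_part_increments_le[OF assms(1)]
    by (intro integral_mono integrable_sum_increments integrable_indicator_coin_space sets_visits_event) auto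
  also have "\<dots> = K * visit_prob j"
    using sets_visits_event by (simp add: visit_prob_def)
  finally show ?thesis
    by simp
qed

lemma visit_prob_tendsto_0:
  assumes "transient_site \<omega> 0"
  shows "visit_prob \<longlonglongrightarrow> 0"
proof -
  let ?E = "\<lambda>j. {\<xi>. \<exists>m. j \<le> count_list (walk_hist \<xi> 0 m) 0}"
  have "(\<lambda>j. measure (coin_space \<omega>) (?E j)) \<longlonglongrightarrow> measure (coin_space \<omega>) (\<Inter>j. ?E j)"
    using sets_visits_event
    by (intro coins.finite_Lim_measure_decseq) (auto simp: decseq_def intro: order_trans)
  moreover have "AE \<xi> in coin_space \<omega>. \<not> (\<exists>\<^sub>F n in sequentially. X \<xi> 0 n = 0)"
    using assms unfolding transient_site_def by blast
  then have "AE \<xi> in coin_space \<omega>. \<xi> \<notin> (\<Inter>j. ?E j)"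
    by eventually_elim (use frequently_visits_if_unbounded in blast)
  then have "measure (coin_space \<omega>) {\<xi> \<in> space (coin_space \<omega>). \<xi> \<in> (\<Inter>j. ?E j)} = 0"
    by (rule coins.prob_eq_0_AE)
  then have "measure (coin_space \<omega>) (\<Inter>j. ?E j) = 0"
    by (simp only: space_coin_space UNIV_I simp_thms Collect_mem_eq)
  ultimately show ?thesis
    by (simp add: visit_prob_def[abs_def])
qed

lemma nn_integral_D_plus_at_T_le:
  assumes "0 < K"
  shows "(\<integral>\<^sup>+ \<xi>. ennreal (D_plus_at_T \<omega> \<xi> 0 K) \<partial>coin_space \<omega>) \<le> ennreal K"
proof -
  have "ennreal (D_plus_at_T \<omega> \<xi> 0 K) \<le> (SUP n. ennreal (drift_sum K \<xi> n))" for \<xi>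
  proof (cases "\<exists>T. X \<xi> 0 T = K")
    case True
    then show ?thesis
      using D_plus_at_T_eq_drift_sum[OF assms] by (auto intro: SUP_upper2)
  qed (simp add: D_plus_at_T_def)
  then have "(\<integral>\<^sup>+ \<xi>. ennreal (D_plus_at_T \<omega> \<xi> 0 K) \<partial>coin_space \<omega>)
      \<le> (\<integral>\<^sup>+ \<xi>. (SUP n. ennreal (drift_sum K \<xi> n)) \<partial>coin_space \<omega>)"
    by (rule nn_integral_mono)
  also have "\<dots> = (SUP n. \<integral>\<^sup>+ \<xi>. ennreal (drift_sum K \<xi> n) \<partial>coin_space \<omega>)"
  proof (rule nn_integral_monotone_convergence_SUP)
    show "incseq (\<lambda>n \<xi>. ennreal (drift_sum K \<xi> n))"
      by (auto simp: incseq_def le_fun_def intro: ennreal_leI drift_sum_mono)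
    show "(\<lambda>\<xi>. ennreal (drift_sum K \<xi> n)) \<in> borel_measurable (coin_space \<omega>)" for n
      using borel_measurable_integrable[OF integrable_drift_sum] by measurable
  qed
  also have "\<dots> = (SUP n. ennreal (\<integral>\<xi>. drift_sum K \<xi> n \<partial>coin_space \<omega>))"
    by (simp add: nn_integral_eq_integral integrable_drift_sum drift_sum_nonneg)
  also have "\<dots> \<le> ennreal K"
    using integral_drift_sum_le[OF assms] by (intro SUP_least ennreal_leI)
  finally show ?thesis .
qed

lemma integral_drift_sum_le_nn_integral:
  assumes "0 < K"
  shows "ennreal (\<integral>\<xi>. drift_sum K \<xi> n \<partial>coin_space \<omega>) \<le> (\<integral>\<^sup>+ \<xi>. ennreal (D_plus_at_T \<omega> \<xi> 0 K) \<partial>coin_space \<omega>)"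
proof -
  have "ennreal (\<integral>\<xi>. drift_sum K \<xi> n \<partial>coin_space \<omega>) = (\<integral>\<^sup>+ \<xi>. ennreal (drift_sum K \<xi> n) \<partial>coin_space \<omega>)"
    by (simp add: nn_integral_eq_integral integrable_drift_sum drift_sum_nonneg)
  also have "\<dots> \<le> (\<integral>\<^sup>+ \<xi>. ennreal (D_plus_at_T \<omega> \<xi> 0 K) \<partial>coin_space \<omega>)"
    using AE_hits_level[OF assms]
    by (intro nn_integral_mono_AE, eventually_elim) (intro ennreal_leI drift_sum_le_D_plus_at_T[OF assms])
  finally show ?thesis .
qed

lemma nn_integral_D_plus_at_T_eq_enn2real:
  assumes "0 < K"
  shows "(\<integral>\<^sup>+ \<xi>. ennreal (D_plus_at_T \<omega> \<xi> 0 K) \<partial>coin_space \<omega>)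
       = ennreal (enn2real (\<integral>\<^sup>+ \<xi>. ennreal (D_plus_at_T \<omega> \<xi> 0 K) \<partial>coin_space \<omega>))"
  using nn_integral_D_plus_at_T_le[OF assms] by (simp add: le_less_trans)

lemma nn_integral_D_plus_at_T_divide:
  assumes "0 < K"
  shows "(\<integral>\<^sup>+ \<xi>. ennreal (D_plus_at_T \<omega> \<xi> 0 (int K)) \<partial>coin_space \<omega>) / of_nat K
       = ennreal (enn2real (\<integral>\<^sup>+ \<xi>. ennreal (D_plus_at_T \<omega> \<xi> 0 (int K)) \<partial>coin_space \<omega>) / K)"
  using assms
  by (subst nn_integral_D_plus_at_T_eq_enn2real) (simp_all add: divide_ennreal ennreal_of_nat_eq_real_of_nat)

lemma enn2real_D_plus_at_T_le:
  assumes "0 < K"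
  shows "enn2real (\<integral>\<^sup>+ \<xi>. ennreal (D_plus_at_T \<omega> \<xi> 0 K) \<partial>coin_space \<omega>) \<le> K"
  using enn2real_mono[OF nn_integral_D_plus_at_T_le[OF assms]] assms by simp

lemma enn2real_D_plus_at_T_ge:
  assumes "0 < K" and "1 \<le> j"
  shows "K - (real j - 1) - 2 * K * visit_prob j \<le> enn2real (\<integral>\<^sup>+ \<xi>. ennreal (D_plus_at_T \<omega> \<xi> 0 K) \<partial>coin_space \<omega>)"
    (is "_ \<le> ?s")
proof -
  let ?p = "\<lambda>n. measure (coin_space \<omega>) {\<xi>. K \<notin> set (walk_hist \<xi> 0 n)}"
  have "K * (1 - ?p n) - (real j - 1) - 2 * K * visit_prob j \<le> ?s" for n
  proof -
    have "{\<xi>. K \<in> set (walk_hist \<xi> 0 n)} = space (coin_space \<omega>) - {\<xi>. K \<notin> set (walk_hist \<xi> 0 n)}"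
      by auto
    then have "measure (coin_space \<omega>) {\<xi>. K \<in> set (walk_hist \<xi> 0 n)} = 1 - ?p n"
      using coins.prob_compl[OF sets_walk_hist_pred[where Q="\<lambda>h. K \<notin> set h"]] by simp
    then have "K * (1 - ?p n) - (real j - 1) - 2 * K * visit_prob j \<le> (\<integral>\<xi>. drift_sum K \<xi> n \<partial>coin_space \<omega>)"
      using integral_drift_sum_ge[OF assms(1), of n] integral_zero_visits_le[OF assms, of n] by simp
    also have "\<dots> \<le> ?s"
      using integral_drift_sum_le_nn_integral[OF assms(1), of n]
      by (subst (asm) nn_integral_D_plus_at_T_eq_enn2real[OF assms(1)]) (simp add: ennreal_le_iff)
    finally show ?thesis .
  qed
  moreover have "(\<lambda>n. K * (1 - ?p n) - (real j - 1) - 2 * K * visit_prob j) \<longlonglongrightarrow> real_of_int K * (1 - 0) - (real j - 1) - 2 * K * visit_prob j"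
    by (intro tendsto_intros prob_not_hit_tendsto_0[OF assms(1)])
  ultimately show ?thesis
    by (intro LIMSEQ_le_const2) auto
qed

end

lemma ratio_tendsto_1:
  fixes s b :: "nat \<Rightarrow> real"
  assumes b: "b \<longlonglongrightarrow> 0"
    and upper: "\<And>K. 0 < K \<Longrightarrow> s K \<le> K"
    and lower: "\<And>K j. 0 < K \<Longrightarrow> 1 \<le> j \<Longrightarrow> K - (real j - 1) - 2 * K * b j \<le> s K"
  shows "(\<lambda>K. s K / K) \<longlonglongrightarrow> 1"
proof (rule LIMSEQ_I)
  fix r :: real
  assume "0 < r"
  then obtain j0 where j0: "\<And>j. j0 \<le> j \<Longrightarrow> \<bar>b j\<bar> < r / 4"
    using LIMSEQ_D[OF b, of "r / 4"] by auto
  define j where "j = Suc j0"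
  obtain N :: nat where N: "2 * real j / r < N"
    using reals_Archimedean2 by blast
  have "\<bar>s K / K - 1\<bar> < r" if "N < K" for K
  proof -
    have K: "0 < K" "0 < real K"
      using that by auto
    have "2 * real j < N * r"
      using N \<open>0 < r\<close> by (simp add: pos_divide_less_eq)
    also have "\<dots> < K * r"
      using that \<open>0 < r\<close> by simp
    finally have "(real j - 1) / K < r / 2"
      using K by (simp add: pos_divide_less_eq mult_ac)
    moreover have "K - (real j - 1) - 2 * K * b j \<le> s K"
      using lower[OF K(1), of j] by (simp add: j_def)
    then have "(K - (real j - 1) - 2 * K * b j) / K \<le> s K / K"
      using K by (intro divide_right_mono) auto
    moreover have "(K - (real j - 1) - 2 * K * b j) / K = 1 - (real j - 1) / K - 2 * b j"
      using K by (simp add: field_simps)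
    moreover have "s K / K \<le> 1"
      using upper[OF K(1)] K by simp
    ultimately show ?thesis
      using j0[of j] by (auto simp: j_def)
  qed
  then show "\<exists>no. \<forall>K\<ge>no. norm (s K / K - 1) < r"
    by (intro exI[of _ "Suc N"]) auto
qed

theorem mainTheorem6:
  assumes "\<omega> \<in> Omega_plus"
    and "transient_site \<omega> 0"
  shows "((\<lambda>K::nat. (\<integral>\<^sup>+ \<xi>. ennreal (D_plus_at_T \<omega> \<xi> 0 (int K)) \<partial>coin_space \<omega>) / of_nat K)
           \<longlongrightarrow> 1) sequentially"
proof -
  interpret cookie_env \<omega>
    by unfold_locales (rule assms(1))
  define s where "s K = enn2real (\<integral>\<^sup>+ \<xi>. ennreal (D_plus_at_T \<omega> \<xi> 0 (int K)) \<partial>coin_space \<omega>)" for K :: nat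
  have "(\<lambda>K. s K / K) \<longlonglongrightarrow> 1"
  proof (rule ratio_tendsto_1[OF visit_prob_tendsto_0[OF assms(2)]])
    show "s K \<le> K" if "0 < K" for K
      using enn2real_D_plus_at_T_le[of "int K"] that by (simp add: s_def)
    show "K - (real j - 1) - 2 * K * visit_prob j \<le> s K" if "0 < K" and "1 \<le> j" for K j
      using enn2real_D_plus_at_T_ge[of "int K" j] that by (simp add: s_def)
  qed
  then have "(\<lambda>K. ennreal (s K / K)) \<longlonglongrightarrow> 1"
    using tendsto_ennrealI by fastforce
  moreover have "\<forall>\<^sub>F K in sequentially. ennreal (s K / K)
      = (\<integral>\<^sup>+ \<xi>. ennreal (D_plus_at_T \<omega> \<xi> 0 (int K)) \<partial>coin_space \<omega>) / of_nat K"
    using nn_integral_D_plus_at_T_divide by (intro eventually_sequentiallyI[of 1]) (simp add: s_def)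
  ultimately show ?thesis
    by (rule Lim_transform_eventually)
qed

end
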